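(* Let $\gamma_+,\gamma_-\ge 0$ with $(\gamma_+,\gamma_-)\neq(0,0)$, and let $\mu\in\mathbb{R}$. Define for $x\in(0,1]$ $$f(x)=\gamma_-x+\gamma_+\ln x,\qquad g(x)=\gamma_-\ln x-\frac{\gamma_+}{x},$$ $$\Delta(x)=\gamma_++\gamma_--\frac{\gamma_+}{x}-\gamma_-x+(\gamma_--\gamma_+-\mu)\ln x,$$ and for $x\in(0,1)$, $h(x)=\dfrac{\gamma_-x+\gamma_+/x-(\gamma_++\gamma_-)}{\ln x}$. Let $(z_n)_{n\ge0}$ be a sequence with $0<z_n\le1$ for all $n$ and $z_0<1$, satisfying $$2[f(z_1)-f(z_0)]=\Delta(z_0),$$ $$(n+2)[f(z_{n+1})-f(z_n)]=n[g(z_n)-g(z_{n-1})]+\Delta(z_n)\quad\text{for all } n\ge1.$$ Then: if $h(z_0)>\gamma_--\gamma_+-\mu$, the sequence $(z_n)$ is strictly increasing; if $h(z_0)<\gamma_--\gamma_+-\mu$, it is strictly decreasing; and $(z_n)$ is constant if and only if $h(z_0)=\gamma_--\gamma_+-\mu$. In particular $(z_n)$ is either strictly increasing, strictly decreasing, or constant.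
   Context: These equations are the stationarity conditions of a Lagrange-multiplier problem, where $z_n=p_{n+1}/p_n$ are ratios of consecutive eigenvalues of a passive state with infinite Fock support, but the claim is purely about real sequences as stated. *)

theory Defs
  imports Complex_Main
begin

definition fF :: "real \<Rightarrow> real \<Rightarrow> real \<Rightarrow> real" where
  "fF gp gm x = gm * x + gp * ln x"

definition gG :: "real \<Rightarrow> real \<Rightarrow> real \<Rightarrow> real" where
  "gG gp gm x = gm * ln x - gp / x"

definition Delta :: "real \<Rightarrow> real \<Rightarrow> real \<Rightarrow> real \<Rightarrow> real" where
  "Delta gp gm mu x = gp + gm - gp / x - gm * x + (gm - gp - mu) * ln x"

definition hH :: "real \<Rightarrow> real \<Rightarrow> real \<Rightarrow> real" where
  "hH gp gm x = (gm * x + gp / x - (gp + gm)) / ln x"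

end

theory Submission
  imports Defs
begin

text \<open>
  Since \<open>f\<close> and \<open>g\<close> are strictly increasing, the recursion shows that
  \<open>z\<^sub>n\<^sub>+\<^sub>1 - z\<^sub>n\<close> has the sign of \<open>z\<^sub>n - z\<^sub>n\<^sub>-\<^sub>1\<close> whenever \<open>\<Delta>(z\<^sub>n)\<close> has that sign or vanishes.
  On \<open>(0,1)\<close> one has \<open>\<Delta>(x) = (\<gamma>\<^sub>- - \<gamma>\<^sub>+ - \<mu> - h(x)) ln x\<close> with \<open>h\<close> increasing, because
  \<open>(x - 1) / ln x\<close> increases on \<open>(0,1)\<close> and on \<open>(1,\<infinity>)\<close>; and \<open>\<Delta>(1) = 0\<close>.
  So once \<open>z\<close> moves away from \<open>z\<^sub>0\<close> in the direction given by the sign of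
  \<open>\<Delta>(z\<^sub>0)\<close>, the sign of \<open>\<Delta>(z\<^sub>n)\<close> cannot change and monotonicity propagates by
  induction. The decreasing case is the increasing one for the reflected data
  \<open>x \<mapsto> -f(-x)\<close>, \<open>n \<mapsto> -z\<^sub>n\<close>.
\<close>

definition stationarity_recursion ::
    "(real \<Rightarrow> real) \<Rightarrow> (real \<Rightarrow> real) \<Rightarrow> (real \<Rightarrow> real) \<Rightarrow> (nat \<Rightarrow> real) \<Rightarrow> bool" where
  "stationarity_recursion f g D z \<longleftrightarrow>
     2 * (f (z 1) - f (z 0)) = D (z 0) \<and>
     (\<forall>n\<ge>1. real (n + 2) * (f (z (n + 1)) - f (z n))
               = real n * (g (z n) - g (z (n - 1))) + D (z n))"

lemma stationarity_recursion_Suc: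
  assumes "stationarity_recursion f g D z"
  shows "real (n + 3) * (f (z (n + 2)) - f (z (n + 1)))
           = real (n + 1) * (g (z (n + 1)) - g (z n)) + D (z (n + 1))"
  using assms[unfolded stationarity_recursion_def]
  by (auto dest!: spec[of _ "Suc n"] simp: numeral_3_eq_3 numeral_2_eq_2 add.commute)

lemma stationarity_recursion_reflect:
  assumes "stationarity_recursion f g D z"
  shows "stationarity_recursion (\<lambda>x. - f (- x)) (\<lambda>x. - g (- x)) (\<lambda>x. - D (- x)) (\<lambda>n. - z n)"
  using assms unfolding stationarity_recursion_def by (auto simp: algebra_simps)

lemma strict_mono_on_reflect:
  fixes f :: "real \<Rightarrow> real"
  assumes "strict_mono_on S f"
  shows "strict_mono_on (uminus ` S) (\<lambda>x. - f (- x))"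
  using assms by (auto simp: monotone_on_def)

lemma stationarity_recursion_strict_mono:
  assumes rec: "stationarity_recursion f g D z"
    and f: "strict_mono_on S f" and g: "strict_mono_on S g" and z: "range z \<subseteq> S"
    and D0: "D (z 0) > 0" and D_nonneg: "\<forall>x\<in>S. z 0 \<le> x \<longrightarrow> 0 \<le> D x"
  shows "strict_mono z"
proof -
  have zS: "z n \<in> S" for n
    using z by auto
  have f_less: "z m < z k" if "f (z m) < f (z k)" for m k
    using strict_mono_on_less[OF f zS zS] that by simp
  have "z n < z (Suc n) \<and> z 0 \<le> z n" for n
  proof (induction n)
    case 0
    then show ?case using rec D0 f_less[of 0 1] by (simp add: stationarity_recursion_def)
  next
    case (Suc n)
    then have "g (z n) < g (z (n + 1))" and "0 \<le> D (z (n + 1))"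
      using strict_mono_onD[OF g zS zS] D_nonneg zS by auto
    then have "0 < real (n + 3) * (f (z (n + 2)) - f (z (n + 1)))"
      unfolding stationarity_recursion_Suc[OF rec] by (simp add: add_pos_nonneg)
    then show ?case using Suc f_less[of "n + 1" "n + 2"] by (simp add: zero_less_mult_iff)
  qed
  then show ?thesis unfolding strict_mono_Suc_iff by blast
qed

lemma stationarity_recursion_strict_antimono:
  assumes rec: "stationarity_recursion f g D z"
    and f: "strict_mono_on S f" and g: "strict_mono_on S g" and z: "range z \<subseteq> S"
    and D0: "D (z 0) < 0" and D_nonpos: "\<forall>x\<in>S. x \<le> z 0 \<longrightarrow> D x \<le> 0"
  shows "\<forall>m n. m < n \<longrightarrow> z n < z m"
proof -
  have "strict_mono (\<lambda>n. - z n)"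
  proof (rule stationarity_recursion_strict_mono[OF stationarity_recursion_reflect[OF rec]
        strict_mono_on_reflect[OF f] strict_mono_on_reflect[OF g]])
    show "range (\<lambda>n. - z n) \<subseteq> uminus ` S"
      using z by auto
    show "\<forall>x\<in>uminus ` S. - z 0 \<le> x \<longrightarrow> 0 \<le> - D (- x)"
      using D_nonpos by auto
  qed (use D0 in simp)
  then show ?thesis
    by (auto dest: strict_monoD)
qed

lemma stationarity_recursion_constant_iff:
  assumes rec: "stationarity_recursion f g D z"
    and f: "inj_on f S" and z: "range z \<subseteq> S"
  shows "(\<forall>n. z n = z 0) \<longleftrightarrow> D (z 0) = 0"
proof
  assume "\<forall>n. z n = z 0"
  then have "z 1 = z 0" ..
  then show "D (z 0) = 0"
    using rec by (simp add: stationarity_recursion_def)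
next
  assume D0: "D (z 0) = 0"
  have f_eq: "z m = z k" if "f (z m) = f (z k)" for m k
    using inj_onD[OF f that] z by auto
  have "z n = z 0 \<and> z (Suc n) = z 0" for n
  proof (induction n)
    case 0
    then show ?case using rec D0 f_eq[of 1 0] by (simp add: stationarity_recursion_def)
  next
    case (Suc n)
    then have "real (n + 3) * (f (z (n + 2)) - f (z (n + 1))) = 0"
      unfolding stationarity_recursion_Suc[OF rec] using D0 by simp
    then show ?case using Suc f_eq[of "n + 2" "n + 1"] by simp
  qed
  then show "\<forall>n. z n = z 0" by blast
qed

lemma diff_one_div_ln_mono:
  fixes a b :: real
  assumes "0 < a" "a \<le> b" "b < 1 \<or> 1 < a"
  shows "(a - 1) / ln a \<le> (b - 1) / ln b"
proof (rule DERIV_nonneg_imp_increasing_open[OF assms(2)])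
  have ne1: "x \<noteq> 1" "0 < x" if "a \<le> x" "x \<le> b" for x
    using assms that by auto
  show "continuous_on {a..b} (\<lambda>x. (x - 1) / ln x)"
    by (intro continuous_intros) (use ne1 ln_eq_zero_iff in force)+
  fix x assume "a < x" "x < b"
  then have x: "0 < x" "x \<noteq> 1"
    using ne1[of x] by auto
  have "DERIV (\<lambda>x. (x - 1) / ln x) x :> (ln x - (x - 1) / x) / (ln x)\<^sup>2"
    using x by (auto intro!: derivative_eq_intros simp: power2_eq_square)
  moreover have "(x - 1) / x \<le> ln x"
    using ln_diff_le[of 1 x] x by (simp add: field_simps)
  ultimately show "\<exists>y. DERIV (\<lambda>x. (x - 1) / ln x) x :> y \<and> 0 \<le> y"
    by force
qed

lemma strict_mono_on_fF:
  assumes "gp \<ge> 0" "gm \<ge> 0" "(gp, gm) \<noteq> (0, 0)"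
  shows "strict_mono_on {0<..} (fF gp gm)"
proof (rule strict_mono_onI)
  fix x y :: real assume "x \<in> {0<..}" "y \<in> {0<..}" "x < y"
  then have "gm * x \<le> gm * y" "gp * ln x \<le> gp * ln y" "gm * x < gm * y \<or> gp * ln x < gp * ln y"
    using assms by (auto intro: mult_left_mono)
  then show "fF gp gm x < fF gp gm y"
    unfolding fF_def by linarith
qed

lemma strict_mono_on_gG:
  assumes "gp \<ge> 0" "gm \<ge> 0" "(gp, gm) \<noteq> (0, 0)"
  shows "strict_mono_on {0<..} (gG gp gm)"
proof (rule strict_mono_onI)
  fix x y :: real assume "x \<in> {0<..}" "y \<in> {0<..}" "x < y"
  then have "gm * ln x \<le> gm * ln y" "gp / y \<le> gp / x" "gm * ln x < gm * ln y \<or> gp / y < gp / x"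
    using assms by (auto intro: mult_left_mono divide_left_mono divide_strict_left_mono)
  then show "gG gp gm x < gG gp gm y"
    unfolding gG_def by linarith
qed

lemma hH_eq_diff_one_div_ln:
  assumes "0 < x" "x < 1"
  shows "hH gp gm x = gm * ((x - 1) / ln x) - gp * ((1 / x - 1) / ln (1 / x))"
  using assms unfolding hH_def by (simp add: ln_div field_simps)

lemma mono_on_hH:
  assumes "gp \<ge> 0" "gm \<ge> 0"
  shows "mono_on {0<..<1} (hH gp gm)"
proof (rule mono_onI)
  fix a b :: real assume "a \<in> {0<..<1}" "b \<in> {0<..<1}" "a \<le> b"
  then have "(a - 1) / ln a \<le> (b - 1) / ln b" "(1 / b - 1) / ln (1 / b) \<le> (1 / a - 1) / ln (1 / a)"
    using diff_one_div_ln_mono[of a b] diff_one_div_ln_mono[of "1 / b" "1 / a"]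
    by (auto simp: divide_simps)
  then have "gm * ((a - 1) / ln a) \<le> gm * ((b - 1) / ln b)"
    "gp * ((1 / b - 1) / ln (1 / b)) \<le> gp * ((1 / a - 1) / ln (1 / a))"
    using assms by (auto intro: mult_left_mono simp del: times_divide_eq_right)
  with \<open>a \<in> _\<close> \<open>b \<in> _\<close> show "hH gp gm a \<le> hH gp gm b"
    by (simp add: hH_eq_diff_one_div_ln del: times_divide_eq_right)
qed

lemma Delta_eq_hH:
  assumes "0 < x" "x < 1"
  shows "Delta gp gm mu x = (gm - gp - mu - hH gp gm x) * ln x"
  using assms unfolding Delta_def hH_def by (simp add: field_simps)

lemma Delta_nonneg:
  assumes "gp \<ge> 0" "gm \<ge> 0" "0 < y" "y \<le> x" "x \<le> 1" "gm - gp - mu \<le> hH gp gm y"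
  shows "0 \<le> Delta gp gm mu x"
proof (cases "x = 1")
  case True
  then show ?thesis by (simp add: Delta_def)
next
  case False
  with assms have "hH gp gm y \<le> hH gp gm x"
    by (intro mono_onD[OF mono_on_hH]) auto
  moreover have "ln x < 0"
    using assms False by simp
  ultimately show ?thesis
    using assms False by (simp add: Delta_eq_hH mult_nonpos_nonpos)
qed

lemma Delta_nonpos:
  assumes "gp \<ge> 0" "gm \<ge> 0" "0 < x" "x \<le> y" "y < 1" "hH gp gm y \<le> gm - gp - mu"
  shows "Delta gp gm mu x \<le> 0"
proof -
  from assms have "hH gp gm x \<le> hH gp gm y"
    by (intro mono_onD[OF mono_on_hH]) auto
  moreover have "ln x < 0"
    using assms by simp
  ultimately show ?thesis
    using assms by (simp add: Delta_eq_hH mult_nonneg_nonpos)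
qed

theorem lemma3:
  fixes gp gm mu :: real and z :: "nat \<Rightarrow> real"
  assumes "gp \<ge> 0" and "gm \<ge> 0" and "(gp, gm) \<noteq> (0, 0)"
    and "\<And>n. 0 < z n \<and> z n \<le> 1"
    and "z 0 < 1"
    and "2 * (fF gp gm (z 1) - fF gp gm (z 0)) = Delta gp gm mu (z 0)"
    and "\<And>n. n \<ge> 1 \<Longrightarrow>
           real (n + 2) * (fF gp gm (z (n + 1)) - fF gp gm (z n))
           = real n * (gG gp gm (z n) - gG gp gm (z (n - 1))) + Delta gp gm mu (z n)"
  shows "(hH gp gm (z 0) > gm - gp - mu \<longrightarrow> strict_mono z)
    \<and> (hH gp gm (z 0) < gm - gp - mu \<longrightarrow> (\<forall>m n. m < n \<longrightarrow> z n < z m))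
    \<and> ((\<forall>n. z n = z 0) \<longleftrightarrow> hH gp gm (z 0) = gm - gp - mu)
    \<and> (strict_mono z \<or> (\<forall>m n. m < n \<longrightarrow> z n < z m) \<or> (\<forall>n. z n = z 0))"
proof -
  let ?c = "gm - gp - mu" and ?h0 = "hH gp gm (z 0)"
  have rec: "stationarity_recursion (fF gp gm) (gG gp gm) (Delta gp gm mu) z"
    using assms(6,7) unfolding stationarity_recursion_def by blast
  have z: "range z \<subseteq> {0<..1}"
    using assms(4) by auto
  have f: "strict_mono_on {0<..1} (fF gp gm)" and g: "strict_mono_on {0<..1} (gG gp gm)"
    using strict_mono_on_fF[OF assms(1-3)] strict_mono_on_gG[OF assms(1-3)]
    by (auto intro: monotone_on_subset)
  have D0: "Delta gp gm mu (z 0) = (?c - ?h0) * ln (z 0)" and ln0: "ln (z 0) < 0"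
    using assms(4,5) Delta_eq_hH by auto
  have inc: "?c < ?h0 \<Longrightarrow> strict_mono z"
    using D0 ln0 assms(4)
    by (intro stationarity_recursion_strict_mono[OF rec f g z])
      (auto simp: mult_neg_neg intro!: Delta_nonneg[OF assms(1,2), of "z 0"])
  have dec: "?h0 < ?c \<Longrightarrow> \<forall>m n. m < n \<longrightarrow> z n < z m"
    using D0 ln0 assms(4,5)
    by (intro stationarity_recursion_strict_antimono[OF rec f g z])
      (auto simp: mult_pos_neg intro!: Delta_nonpos[OF assms(1,2), of _ "z 0"])
  have const: "(\<forall>n. z n = z 0) \<longleftrightarrow> ?h0 = ?c"
    using stationarity_recursion_constant_iff[OF rec strict_mono_on_imp_inj_on[OF f] z] D0 ln0
    by auto
  show ?thesis
    using inc dec const by (cases ?h0 ?c rule: linorder_cases) auto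
qed

end
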